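(* Let $V$ be a finite-dimensional vector space over a field and let $\rho,\lambda$ be endomorphisms of $V$. Suppose there is $n\in\mathbb Z_{\ge1}$ with $\rho^{n+1}=\rho^n$, $\ker(\rho^n)\cap\ker(\lambda)=0$ and $\rho^n\circ\lambda=\lambda\circ\rho^n$. Then $\mathrm{im}(\rho)+\mathrm{im}(\lambda)=V$. *)

theory Defs
  imports "HOL.Vector_Spaces"
begin

end

theory Submission
  imports Defs
begin

text \<open>
  Since \<open>\<rho>\<^sup>n\<close> is an idempotent \<open>P\<close> commuting with \<open>\<lambda>\<close>, the linear map
  \<open>v \<mapsto> P v + \<lambda> (v - P v)\<close> is injective: applying \<open>P\<close> kills the second summand,
  so \<open>P v = 0\<close> and then \<open>\<lambda> v = 0\<close>. By finite dimensionality it is surjective,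
  and its values lie in \<open>im P + im \<lambda> \<subseteq> im \<rho> + im \<lambda>\<close>.
\<close>

lemma funpow_idempotent:
  assumes "f ^^ Suc n = f ^^ n"
  shows "f ^^ n \<circ> f ^^ n = f ^^ n"
proof -
  have stable: "f ^^ (n + k) = f ^^ n" for k
  proof (induction k)
    case (Suc k)
    have "f ^^ (n + Suc k) = f ^^ Suc n \<circ> f ^^ k"
      by (simp only: add_Suc_shift[symmetric] funpow_add)
    also have "\<dots> = f ^^ (n + k)"
      by (simp only: assms funpow_add)
    finally show ?case using Suc.IH by simp
  qed simp
  show ?thesis using stable[of n] by (simp only: funpow_add[symmetric])
qed

lemma range_funpow_subset:
  fixes f :: "'a \<Rightarrow> 'a"
  assumes "n \<ge> 1"
  shows "range (f ^^ n) \<subseteq> range f"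
proof -
  obtain m where "f ^^ n = f \<circ> f ^^ m" using assms by (cases n) auto
  then show ?thesis by (metis image_comp image_subset_iff rangeI)
qed

lemma (in vector_space) linear_funpow:
  assumes "Vector_Spaces.linear scale scale f"
  shows "Vector_Spaces.linear scale scale (f ^^ k)"
proof (induction k)
  case 0
  show ?case using linear_id by (simp add: id_def)
next
  case (Suc k)
  then show ?case using Vector_Spaces.linear_compose[OF Suc assms] by (simp add: comp_def)
qed

lemma (in finite_dimensional_vector_space) range_add_range_eq_UNIV_if_idempotent_commute:
  assumes linP: "Vector_Spaces.linear scale scale P"
    and linl: "Vector_Spaces.linear scale scale l"
    and idem: "P \<circ> P = P"
    and comm: "P \<circ> l = l \<circ> P"
    and ker_trivial: "\<And>v. P v = 0 \<Longrightarrow> l v = 0 \<Longrightarrow> v = 0"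
  shows "{x + y | x y. x \<in> range P \<and> y \<in> range l} = UNIV"
proof -
  interpret vp: vector_space_pair scale scale by unfold_locales
  interpret P: Vector_Spaces.linear scale scale P by fact
  interpret l: Vector_Spaces.linear scale scale l by fact
  have PP: "P (P v) = P v" for v using idem by (metis comp_apply)
  have Pl: "P (l v) = l (P v)" for v using comm by (metis comp_apply)
  define f where "f v = P v + l (v - P v)" for v
  have linf: "Vector_Spaces.linear scale scale f"
  proof -
    have "Vector_Spaces.linear scale scale (\<lambda>v. v - P v)"
      using vp.linear_compose_sub[OF linear_id linP] by (simp add: id_def)
    then have "Vector_Spaces.linear scale scale (l \<circ> (\<lambda>v. v - P v))"
      using Vector_Spaces.linear_compose linl by blast
    then show ?thesis
      using vp.linear_compose_add[OF linP] unfolding f_def by (simp add: comp_def)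
  qed
  have "inj f"
    unfolding vp.linear_inj_iff_eq_0[OF linf]
  proof (intro allI impI)
    fix v assume fv: "f v = 0"
    have "P (f v) = P v + l (P v - P (P v))"
      unfolding f_def by (simp only: P.add Pl P.diff PP)
    then have Pv: "P v = 0" using fv by (simp add: PP)
    then have "l v = 0" using fv unfolding f_def by simp
    with Pv show "v = 0" by (rule ker_trivial)
  qed
  then have "surj f" using linear_inj_imp_surj[OF linf] by simp
  have "u = P v + l (v - P v)" if "u = f v" for u v using that f_def by simp
  then show ?thesis using \<open>surj f\<close> by (blast dest: surjD)
qed

theorem mainTheorem5:
  fixes scale :: "'a::field \<Rightarrow> 'b::ab_group_add \<Rightarrow> 'b"
    and Basis :: "'b set"
    and \<rho> l :: "'b \<Rightarrow> 'b"
    and n :: nat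
  assumes "Vector_Spaces.finite_dimensional_vector_space scale Basis"
    and "Vector_Spaces.linear scale scale \<rho>"
    and "Vector_Spaces.linear scale scale l"
    and "n \<ge> 1"
    and "\<rho> ^^ (n + 1) = \<rho> ^^ n"
    and "{v. (\<rho> ^^ n) v = 0} \<inter> {v. l v = 0} = {0}"
    and "(\<rho> ^^ n) \<circ> l = l \<circ> (\<rho> ^^ n)"
  shows "{x + y | x y. x \<in> range \<rho> \<and> y \<in> range l} = UNIV"
proof -
  interpret V: finite_dimensional_vector_space scale Basis by fact
  have "{x + y | x y. x \<in> range (\<rho> ^^ n) \<and> y \<in> range l} = UNIV"
  proof (rule V.range_add_range_eq_UNIV_if_idempotent_commute)
    show "Vector_Spaces.linear scale scale (\<rho> ^^ n)" using assms(2) by (rule V.linear_funpow)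
    show "\<rho> ^^ n \<circ> \<rho> ^^ n = \<rho> ^^ n" using assms(5) by (intro funpow_idempotent) simp
    show "Vector_Spaces.linear scale scale l" by fact
    show "\<rho> ^^ n \<circ> l = l \<circ> \<rho> ^^ n" by fact
    show "v = 0" if "(\<rho> ^^ n) v = 0" "l v = 0" for v using that assms(6) by blast
  qed
  moreover have "range (\<rho> ^^ n) \<subseteq> range \<rho>" using assms(4) by (rule range_funpow_subset)
  ultimately show ?thesis by blast
qed

end
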